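(* Let $\varphi$ be an $\mathcal{ALC}$-formula, $M$ an interpretation and $f\in\mathrm{ftypes}(\varphi)$. If $M\models\varphi$ and $M\models\bigwedge\mathrm{lit}(f)$, then $\mathrm{Mod}(\bigwedge\mathrm{lit}(f))=[M]_\varphi$.
   Context: $\mathcal{ALC}$ concepts: $C::=A\mid\neg C\mid(C\sqcap C)\mid\exists r.C$. $\mathcal{ALC}$-formulae: $\phi::=\alpha\mid\neg\phi\mid(\phi\wedge\phi)$, atomic $\alpha::=C(a)\mid r(a,b)\mid(C=\top)$; $\neg\neg\psi$ identified with $\psi$. A literal is an atomic formula or its negation. Interpretations: countable nonempty domain, standard semantics; $\mathrm{Mod}(\psi)$: interpretations satisfying $\psi$. $\mathrm{Sub}(\alpha)=\mathrm{Sub}(\neg\alpha)=\{\alpha,\neg\alpha\}$ for atomic $\alpha$; $\mathrm{Sub}(\psi\wedge\psi')=\mathrm{Sub}(\neg(\psi\wedge\psi'))=\{\psi\wedge\psi',\neg(\psi\wedge\psi')\}\cup\mathrm{Sub}(\psi)\cup\mathrm{Sub}(\psi')$. $\mathrm{con}(\varphi)$: smallest set of concepts containing $C$ whenever $(C=\top)$ or $C(a)$ is in $\mathrm{Sub}(\varphi)$, closed under subconcepts of $\sqcap$, $\exists r.\cdot$, and single negation. $\mathrm{ind}(\varphi)$: individual names in $\varphi$. Concept type: $c\subseteq\mathrm{con}(\varphi)$ with $D\in c$ iff $\neg D\notin c$, $D\sqcap E\in c$ iff $\{D,E\}\subseteq c$. Formula type for $\varphi$: $f\subseteq\mathrm{Sub}(\varphi)$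 with $\psi\in f$ iff $\neg\psi\notin f$, $\psi\wedge\psi'\in f$ iff $\{\psi,\psi'\}\subseteq f$. Model candidate $(T,o,f)$: $T$ set of concept types, $o:\mathrm{ind}(\varphi)\to T$, $f$ formula type with $\varphi\in f$, $C(a)\in f\Rightarrow C\in o(a)$, $r(a,b)\in f\Rightarrow\{\neg C\mid\neg\exists r.C\in o(a)\}\subseteq o(b)$. Quasimodel: model candidate where each $\exists r.D\in c\in T$ has $c'\in T$ with $\{D\}\cup\{\neg E\mid\neg\exists r.E\in c\}\subseteq c'$; $\neg C\in c\in T$ implies $(C=\top)\notin f$; $\neg(C=\top)\in f$ implies some $c\in T$ has $C\notin c$; $T\ne\emptyset$. $\mathrm{ftypes}(\varphi)=\{f\mid(T,o,f)$ quasimodel for $\varphi\}$. $\mathrm{lit}(f)$: literals in $f$. $\mathcal{L}_{lit}(\varphi)$: Boolean combinations of atomic formulae occurring in $\varphi$; $M'\equiv_\varphi M$ iff they satisfy the same formulae of $\mathcal{L}_{lit}(\varphi)$; $[M]_\varphi=\{M'\mid M'\equiv_\varphi M\}$. *)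

theory Defs
  imports "HOL-Library.Countable"
begin

datatype concept =
    CName nat
  | CNeg concept
  | CAnd concept concept
  | CEx nat concept

datatype fml =
    FConc concept nat
  | FRole nat nat nat
  | FTop concept               (* C = Top *)
  | FNeg fml
  | FAnd fml fml

fun is_atomic :: "fml \<Rightarrow> bool" where
  "is_atomic (FConc C a) = True"
| "is_atomic (FRole r a b) = True"
| "is_atomic (FTop C) = True"
| "is_atomic _ = False"

definition is_literal :: "fml \<Rightarrow> bool" where
  "is_literal \<psi> \<longleftrightarrow> is_atomic \<psi> \<or> (\<exists>\<alpha>. \<psi> = FNeg \<alpha> \<and> is_atomic \<alpha>)"

text \<open>Identification of double negations: normal form and "negation" operators.\<close>

fun norm :: "fml \<Rightarrow> fml" where
  "norm (FNeg (FNeg x)) = norm x"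
| "norm (FNeg x) = FNeg (norm x)"
| "norm (FAnd a b) = FAnd (norm a) (norm b)"
| "norm x = x"

fun neg :: "fml \<Rightarrow> fml" where
  "neg (FNeg x) = x"
| "neg x = FNeg x"

fun cneg :: "concept \<Rightarrow> concept" where
  "cneg (CNeg x) = x"
| "cneg x = CNeg x"

record 'd interp =
  dom :: "'d set"
  cext :: "nat \<Rightarrow> 'd set"
  rext :: "nat \<Rightarrow> ('d \<times> 'd) set"
  iext :: "nat \<Rightarrow> 'd"

definition is_interp :: "('d::countable) interp \<Rightarrow> bool" where
  "is_interp M \<longleftrightarrow> dom M \<noteq> {} \<and> (\<forall>A. cext M A \<subseteq> dom M) \<and>
     (\<forall>r. rext M r \<subseteq> dom M \<times> dom M) \<and> (\<forall>a. iext M a \<in> dom M)"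

fun ext :: "'d interp \<Rightarrow> concept \<Rightarrow> 'd set" where
  "ext M (CName A) = cext M A"
| "ext M (CNeg C) = dom M - ext M C"
| "ext M (CAnd C D) = ext M C \<inter> ext M D"
| "ext M (CEx r C) = {x \<in> dom M. \<exists>y. (x, y) \<in> rext M r \<and> y \<in> ext M C}"

fun sat :: "'d interp \<Rightarrow> fml \<Rightarrow> bool" where
  "sat M (FConc C a) = (iext M a \<in> ext M C)"
| "sat M (FRole r a b) = ((iext M a, iext M b) \<in> rext M r)"
| "sat M (FTop C) = (ext M C = dom M)"
| "sat M (FNeg \<psi>) = (\<not> sat M \<psi>)"
| "sat M (FAnd \<psi> \<chi>) = (sat M \<psi> \<and> sat M \<chi>)"

text \<open>Models of a (finite) conjunction of formulas given as a set.\<close>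
definition ModConj :: "fml set \<Rightarrow> ('d::countable) interp set" where
  "ModConj S = {M. is_interp M \<and> (\<forall>\<psi>\<in>S. sat M \<psi>)}"

fun Sub0 :: "fml \<Rightarrow> fml set" where
  "Sub0 (FNeg \<psi>) = Sub0 \<psi>"
| "Sub0 (FAnd \<psi> \<chi>) = {FAnd \<psi> \<chi>, FNeg (FAnd \<psi> \<chi>)} \<union> Sub0 \<psi> \<union> Sub0 \<chi>"
| "Sub0 \<alpha> = {\<alpha>, FNeg \<alpha>}"

definition Sub :: "fml \<Rightarrow> fml set" where
  "Sub \<phi> = Sub0 (norm \<phi>)"

inductive_set con :: "fml \<Rightarrow> concept set" for \<phi> where
  base_top: "FTop C \<in> Sub \<phi> \<Longrightarrow> C \<in> con \<phi>"
| base_ass: "FConc C a \<in> Sub \<phi> \<Longrightarrow> C \<in> con \<phi>"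
| sub_and1: "CAnd D E \<in> con \<phi> \<Longrightarrow> D \<in> con \<phi>"
| sub_and2: "CAnd D E \<in> con \<phi> \<Longrightarrow> E \<in> con \<phi>"
| sub_ex: "CEx r D \<in> con \<phi> \<Longrightarrow> D \<in> con \<phi>"
| sub_neg: "CNeg D \<in> con \<phi> \<Longrightarrow> D \<in> con \<phi>"
| negclos: "D \<in> con \<phi> \<Longrightarrow> cneg D \<in> con \<phi>"

fun ind :: "fml \<Rightarrow> nat set" where
  "ind (FConc C a) = {a}"
| "ind (FRole r a b) = {a, b}"
| "ind (FTop C) = {}"
| "ind (FNeg \<psi>) = ind \<psi>"
| "ind (FAnd \<psi> \<chi>) = ind \<psi> \<union> ind \<chi>"

fun atoms :: "fml \<Rightarrow> fml set" where
  "atoms (FNeg \<psi>) = atoms \<psi>"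
| "atoms (FAnd \<psi> \<chi>) = atoms \<psi> \<union> atoms \<chi>"
| "atoms \<alpha> = {\<alpha>}"

definition concept_type :: "fml \<Rightarrow> concept set \<Rightarrow> bool" where
  "concept_type \<phi> c \<longleftrightarrow> c \<subseteq> con \<phi> \<and>
     (\<forall>D\<in>con \<phi>. D \<in> c \<longleftrightarrow> cneg D \<notin> c) \<and>
     (\<forall>D E. CAnd D E \<in> con \<phi> \<longrightarrow> (CAnd D E \<in> c \<longleftrightarrow> D \<in> c \<and> E \<in> c))"

definition formula_type :: "fml \<Rightarrow> fml set \<Rightarrow> bool" where
  "formula_type \<phi> f \<longleftrightarrow> f \<subseteq> Sub \<phi> \<and>
     (\<forall>\<psi>\<in>Sub \<phi>. \<psi> \<in> f \<longleftrightarrow> neg \<psi> \<notin> f) \<and>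
     (\<forall>\<psi> \<chi>. FAnd \<psi> \<chi> \<in> Sub \<phi> \<longrightarrow> (FAnd \<psi> \<chi> \<in> f \<longleftrightarrow> \<psi> \<in> f \<and> \<chi> \<in> f))"

definition model_candidate ::
    "fml \<Rightarrow> concept set set \<Rightarrow> (nat \<Rightarrow> concept set) \<Rightarrow> fml set \<Rightarrow> bool" where
  "model_candidate \<phi> T oo f \<longleftrightarrow>
     (\<forall>c\<in>T. concept_type \<phi> c) \<and>
     (\<forall>a\<in>ind \<phi>. oo a \<in> T) \<and>
     formula_type \<phi> f \<and> norm \<phi> \<in> f \<and>
     (\<forall>C a. FConc C a \<in> f \<longrightarrow> C \<in> oo a) \<and>
     (\<forall>r a b. FRole r a b \<in> f \<longrightarrow>
        {cneg C | C. CNeg (CEx r C) \<in> oo a} \<subseteq> oo b)"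

definition quasimodel ::
    "fml \<Rightarrow> concept set set \<Rightarrow> (nat \<Rightarrow> concept set) \<Rightarrow> fml set \<Rightarrow> bool" where
  "quasimodel \<phi> T oo f \<longleftrightarrow>
     model_candidate \<phi> T oo f \<and>
     (\<forall>c\<in>T. \<forall>r D. CEx r D \<in> c \<longrightarrow>
        (\<exists>c'\<in>T. {D} \<union> {cneg E | E. CNeg (CEx r E) \<in> c} \<subseteq> c')) \<and>
     (\<forall>c\<in>T. \<forall>C. cneg C \<in> c \<longrightarrow> FTop C \<notin> f) \<and>
     (\<forall>C. FNeg (FTop C) \<in> f \<longrightarrow> (\<exists>c\<in>T. C \<notin> c)) \<and>
     T \<noteq> {}"

definition ftypes :: "fml \<Rightarrow> fml set set" where
  "ftypes \<phi> = {f. \<exists>T oo. quasimodel \<phi> T oo f}"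

definition lit :: "fml set \<Rightarrow> fml set" where
  "lit f = {\<psi> \<in> f. is_literal \<psi>}"

definition Llit :: "fml \<Rightarrow> fml set" where
  "Llit \<phi> = {\<psi>. atoms \<psi> \<subseteq> atoms \<phi>}"

definition equiv_phi :: "fml \<Rightarrow> ('d::countable) interp \<Rightarrow> 'd interp \<Rightarrow> bool" where
  "equiv_phi \<phi> M' M \<longleftrightarrow> (\<forall>\<psi>\<in>Llit \<phi>. sat M' \<psi> \<longleftrightarrow> sat M \<psi>)"

definition eqclass :: "fml \<Rightarrow> ('d::countable) interp \<Rightarrow> 'd interp set" where
  "eqclass \<phi> M = {M'. is_interp M' \<and> equiv_phi \<phi> M' M}"

end

theory Submission
  imports Defs
begin

text \<open>Of the quasimodel only the formula type \<open>f\<close> matters: it contains \<open>\<alpha>\<close> or \<open>\<not>\<alpha>\<close> for every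
  atom \<open>\<alpha>\<close> of \<open>\<phi>\<close>, so the literals of \<open>f\<close> fix the truth value of each atom of \<open>\<phi>\<close> and hence
  of every formula of \<open>L_lit(\<phi>)\<close>; conversely these literals lie in \<open>L_lit(\<phi>)\<close>.\<close>

lemma atoms_norm: "atoms (norm \<psi>) = atoms \<psi>"
  by (induction \<psi> rule: norm.induct) auto

lemma is_atomic_atoms: "\<alpha> \<in> atoms \<psi> \<Longrightarrow> is_atomic \<alpha>"
  by (induction \<psi>) auto

lemma atoms_of_atom: "\<alpha> \<in> atoms \<psi> \<Longrightarrow> atoms \<alpha> = {\<alpha>}"
  by (induction \<psi>) auto

lemma atoms_in_Sub0: "\<alpha> \<in> atoms \<psi> \<Longrightarrow> \<alpha> \<in> Sub0 \<psi>"
  by (induction \<psi>) auto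

lemma atoms_Sub0_literal: "\<chi> \<in> Sub0 \<psi> \<Longrightarrow> is_literal \<chi> \<Longrightarrow> atoms \<chi> \<subseteq> atoms \<psi>"
  by (induction \<psi>) (auto simp: is_literal_def)

lemma sat_cong_atoms:
  "\<forall>\<alpha>\<in>atoms \<psi>. sat M \<alpha> = sat M' \<alpha> \<Longrightarrow> sat M \<psi> = sat M' \<psi>"
  by (induction \<psi>) auto

lemma equiv_phi_iff_atoms:
  "equiv_phi \<phi> M' M \<longleftrightarrow> (\<forall>\<alpha>\<in>atoms \<phi>. sat M' \<alpha> = sat M \<alpha>)"
proof
  assume equiv: "equiv_phi \<phi> M' M"
  show "\<forall>\<alpha>\<in>atoms \<phi>. sat M' \<alpha> = sat M \<alpha>"
  proof
    fix \<alpha> assume "\<alpha> \<in> atoms \<phi>"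
    then have "\<alpha> \<in> Llit \<phi>"
      unfolding Llit_def using atoms_of_atom by simp
    then show "sat M' \<alpha> = sat M \<alpha>"
      using equiv unfolding equiv_phi_def by simp
  qed
next
  assume agree: "\<forall>\<alpha>\<in>atoms \<phi>. sat M' \<alpha> = sat M \<alpha>"
  show "equiv_phi \<phi> M' M"
    unfolding equiv_phi_def Llit_def
  proof
    fix \<psi> assume "\<psi> \<in> {\<psi>. atoms \<psi> \<subseteq> atoms \<phi>}"
    with agree show "sat M' \<psi> = sat M \<psi>"
      by (intro sat_cong_atoms) auto
  qed
qed

lemma formula_type_lit_in_Llit:
  assumes "formula_type \<phi> f" and "\<psi> \<in> lit f"
  shows "\<psi> \<in> Llit \<phi>"
proof -
  have "\<psi> \<in> Sub0 (norm \<phi>)" and "is_literal \<psi>"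
    using assms unfolding formula_type_def lit_def Sub_def by auto
  then have "atoms \<psi> \<subseteq> atoms (norm \<phi>)"
    by (rule atoms_Sub0_literal)
  then show ?thesis
    unfolding Llit_def by (simp add: atoms_norm)
qed

lemma formula_type_decides_atom:
  assumes "formula_type \<phi> f" and "\<alpha> \<in> atoms \<phi>"
  shows "\<alpha> \<in> lit f \<or> FNeg \<alpha> \<in> lit f"
proof -
  have atomic: "is_atomic \<alpha>"
    using assms(2) by (rule is_atomic_atoms)
  have "\<alpha> \<in> Sub \<phi>"
    using assms(2) unfolding Sub_def by (simp add: atoms_in_Sub0 atoms_norm)
  then have "\<alpha> \<in> f \<or> neg \<alpha> \<in> f"
    using assms(1) unfolding formula_type_def by blast
  moreover have "neg \<alpha> = FNeg \<alpha>"
    using atomic by (cases \<alpha>) auto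
  ultimately show ?thesis
    using atomic unfolding lit_def is_literal_def by auto
qed

lemma ModConj_eq_eqclass:
  fixes M :: "('d::countable) interp"
  assumes in_Llit: "S \<subseteq> Llit \<phi>"
    and decides: "\<And>\<alpha>. \<alpha> \<in> atoms \<phi> \<Longrightarrow> \<alpha> \<in> S \<or> FNeg \<alpha> \<in> S"
    and sat_S: "\<forall>\<psi>\<in>S. sat M \<psi>"
  shows "ModConj S = eqclass \<phi> M"
proof (intro set_eqI iffI)
  fix M' :: "'d interp"
  assume "M' \<in> ModConj S"
  then have interp: "is_interp M'" and sat'_S: "\<forall>\<psi>\<in>S. sat M' \<psi>"
    unfolding ModConj_def by auto
  have "sat M' \<alpha> = sat M \<alpha>" if "\<alpha> \<in> atoms \<phi>" for \<alpha>
    using decides[OF that] sat'_S sat_S by fastforce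
  with interp show "M' \<in> eqclass \<phi> M"
    unfolding eqclass_def equiv_phi_iff_atoms by blast
next
  fix M' :: "'d interp"
  assume "M' \<in> eqclass \<phi> M"
  then show "M' \<in> ModConj S"
    using in_Llit sat_S unfolding eqclass_def equiv_phi_def ModConj_def by blast
qed

theorem mainTheorem18:
  fixes \<phi> :: fml and M :: "('d::countable) interp" and f :: "fml set"
  assumes "is_interp M"
    and "f \<in> ftypes \<phi>"
    and "sat M \<phi>"
    and "\<forall>\<psi>\<in>lit f. sat M \<psi>"
  shows "ModConj (lit f) = eqclass \<phi> M"
proof -
  have type: "formula_type \<phi> f"
    using assms(2) unfolding ftypes_def quasimodel_def model_candidate_def by blast
  show ?thesis
  proof (rule ModConj_eq_eqclass)
    show "lit f \<subseteq> Llit \<phi>"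
      using type formula_type_lit_in_Llit by blast
    show "\<alpha> \<in> lit f \<or> FNeg \<alpha> \<in> lit f" if "\<alpha> \<in> atoms \<phi>" for \<alpha>
      using type that by (rule formula_type_decides_atom)
    show "\<forall>\<psi>\<in>lit f. sat M \<psi>"
      by (fact assms(4))
  qed
qed

end
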